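(* Let $\mathscr Q_n$ be a non-singular quadric in $\mathrm{PG}(n,2)$ of projective index $g\ge 1$, let $0\le s<g$, let $\alpha_s$ be an $s$-dimensional subspace contained in $\mathscr Q_n$, and let $\Gamma_s$ be the graph constructed from $\alpha_s$ as described below. Then for distinct vertices $X,Y$ of $\Gamma_s$: if one of $X,Y$ has type (ii) and the other has type (iii), then $X,Y$ are adjacent in $\Gamma_s$ if and only if the line $XY$ is not contained in $\mathscr Q_n$ (i.e. it is a 2-secant of $\mathscr Q_n$); otherwise $X,Y$ are adjacent in $\Gamma_s$ if and only if the line $XY$ is contained in $\mathscr Q_n$. In particular, two type (i) vertices are always adjacent, and a type (i) vertex is always adjacent to a type (ii) vertex.
   Context: A non-singular quadric $\mathscr Q_n$ in $\mathrm{PG}(n,2)$ is the point set of a non-degenerate quadric; its projective index $g$ is the largest dimension of a projective subspace contained in $\mathscr Q_n$. The point-graph $\Gamma$ has vertex set the points of $\mathscr Q_n$, two distinct points adjacent iff the line joining them is contained in $\mathscr Q_n$. A point $X$ of $\mathscr Q_n$ has type (i) if $X\in\alpha_s$; type (ii) if $X\notin\alpha_s$ and $\langle\alpha_s,X\rangle\subseteq\mathscr Q_n$; type (iii) otherwise. Let $\mathcal X_s$ be the type (ii) points and $\mathcal Y_s$ the points of type (i) or (iii). The graph $\Gamma_s$ has the same vertex set as $\Gamma$ and the same edges, except that for each vertex $R\in\mathcal Y_s$ having exactly $\frac12|\mathcal X_s|$ neighbours in $\mathcal X_s$ (in $\Gamma$), those edges are deleted and $R$ is joined instead to the other $\frac12|\mathcal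 X_s|$ vertices of $\mathcal X_s$. A 2-secant is a line meeting $\mathscr Q_n$ in exactly two points. *)

theory Defs
  imports "HOL-Analysis.Cartesian_Space" "HOL-Library.Z2"
begin

text \<open>PG(n,2): points are the nonzero vectors of bit^'n, where CARD('n) = n+1
  and bit is the field with two elements. A quadric is given by a quadratic
  form Q(x) = sum_{i,j} A i j x_i x_j (every quadratic form over GF(2) has this shape).\<close>

definition qf :: "('n::finite \<Rightarrow> 'n \<Rightarrow> bit) \<Rightarrow> bit ^ 'n \<Rightarrow> bit" where
  "qf A x = (\<Sum>i\<in>UNIV. \<Sum>j\<in>UNIV. A i j * x $ i * x $ j)"

definition polar :: "('n::finite \<Rightarrow> 'n \<Rightarrow> bit) \<Rightarrow> bit ^ 'n \<Rightarrow> bit ^ 'n \<Rightarrow> bit" where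
  "polar A x y = qf A (x + y) - qf A x - qf A y"

definition nonsingular :: "('n::finite \<Rightarrow> 'n \<Rightarrow> bit) \<Rightarrow> bool" where
  "nonsingular A \<longleftrightarrow> \<not> (\<exists>x. x \<noteq> 0 \<and> qf A x = 0 \<and> (\<forall>y. polar A x y = 0))"

definition quadric :: "('n::finite \<Rightarrow> 'n \<Rightarrow> bit) \<Rightarrow> (bit ^ 'n) set" where
  "quadric A = {x. x \<noteq> 0 \<and> qf A x = 0}"

text \<open>Projective subspace of projective dimension d: nonzero vectors of a linear
  subspace of (vector space) dimension d+1.\<close>
definition proj_subspace :: "(bit ^ 'n::finite) set \<Rightarrow> nat \<Rightarrow> bool" where
  "proj_subspace P d \<longleftrightarrow> (\<exists>U. vec.subspace U \<and> vec.dim U = d + 1 \<and> P = U - {0})"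

definition proj_span :: "(bit ^ 'n::finite) set \<Rightarrow> (bit ^ 'n) set" where
  "proj_span S = vec.span S - {0}"

definition proj_index :: "('n::finite \<Rightarrow> 'n \<Rightarrow> bit) \<Rightarrow> nat" where
  "proj_index A = (GREATEST d. \<exists>P. proj_subspace P d \<and> P \<subseteq> quadric A)"

definition adjG :: "('n::finite \<Rightarrow> 'n \<Rightarrow> bit) \<Rightarrow> bit ^ 'n \<Rightarrow> bit ^ 'n \<Rightarrow> bool" where
  "adjG A X Y \<longleftrightarrow> X \<in> quadric A \<and> Y \<in> quadric A \<and> X \<noteq> Y \<and> proj_span {X, Y} \<subseteq> quadric A"

definition type_i :: "('n::finite \<Rightarrow> 'n \<Rightarrow> bit) \<Rightarrow> (bit ^ 'n) set \<Rightarrow> bit ^ 'n \<Rightarrow> bool" where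
  "type_i A W X \<longleftrightarrow> X \<in> quadric A \<and> X \<in> W"

definition type_ii :: "('n::finite \<Rightarrow> 'n \<Rightarrow> bit) \<Rightarrow> (bit ^ 'n) set \<Rightarrow> bit ^ 'n \<Rightarrow> bool" where
  "type_ii A W X \<longleftrightarrow> X \<in> quadric A \<and> X \<notin> W \<and> proj_span (insert X W) \<subseteq> quadric A"

definition type_iii :: "('n::finite \<Rightarrow> 'n \<Rightarrow> bit) \<Rightarrow> (bit ^ 'n) set \<Rightarrow> bit ^ 'n \<Rightarrow> bool" where
  "type_iii A W X \<longleftrightarrow> X \<in> quadric A \<and> X \<notin> W \<and> \<not> proj_span (insert X W) \<subseteq> quadric A"

definition Xset :: "('n::finite \<Rightarrow> 'n \<Rightarrow> bit) \<Rightarrow> (bit ^ 'n) set \<Rightarrow> (bit ^ 'n) set" where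
  "Xset A W = {X. type_ii A W X}"

definition Yset :: "('n::finite \<Rightarrow> 'n \<Rightarrow> bit) \<Rightarrow> (bit ^ 'n) set \<Rightarrow> (bit ^ 'n) set" where
  "Yset A W = {X. type_i A W X \<or> type_iii A W X}"

definition switched :: "('n::finite \<Rightarrow> 'n \<Rightarrow> bit) \<Rightarrow> (bit ^ 'n) set \<Rightarrow> bit ^ 'n \<Rightarrow> bool" where
  "switched A W R \<longleftrightarrow> R \<in> Yset A W \<and>
     2 * card {P \<in> Xset A W. adjG A R P} = card (Xset A W)"

definition adjGs :: "('n::finite \<Rightarrow> 'n \<Rightarrow> bit) \<Rightarrow> (bit ^ 'n) set \<Rightarrow> bit ^ 'n \<Rightarrow> bit ^ 'n \<Rightarrow> bool" where
  "adjGs A W X Y \<longleftrightarrow> X \<in> quadric A \<and> Y \<in> quadric A \<and> X \<noteq> Y \<and>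
     (if (X \<in> Xset A W \<and> switched A W Y) \<or> (Y \<in> Xset A W \<and> switched A W X)
      then \<not> adjG A X Y else adjG A X Y)"

end

theory Submission
  imports Defs
begin

text \<open>A point R of type (iii) lies on a line of the span of \<open>\<alpha>\<^sub>s\<close> and R that is not
  contained in the quadric, so some vector u of \<open>\<alpha>\<^sub>s\<close> has polar value 1 with R.
  Translation by u maps type (ii) points to type (ii) points, is an involution, and
  flips the value of the quadratic form at R + P; hence it swaps the neighbours of R
  in \<open>\<X>\<^sub>s\<close> with its non-neighbours, and R has exactly half of \<open>\<X>\<^sub>s\<close> as neighbours.
  A point of type (i) is adjacent to every type (ii) point, so it is only "switched"
  when \<open>\<X>\<^sub>s\<close> is empty, where switching changes nothing. Consequently the switching
  reverses adjacency exactly between type (ii) and type (iii) points.\<close>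

instance bit :: finite
proof
  have "(UNIV :: bit set) = {0, 1}" by (auto intro: bit.exhaust)
  then show "finite (UNIV :: bit set)" by (metis finite.emptyI finite.insertI)
qed

lemma bit_cases: "(k::bit) = 0 \<or> k = 1"
  by (cases k) auto

lemma vec_bit_add_self [simp]: "(x::bit^'n) + x = 0"
  by (simp add: vec_eq_iff del: add_bit_eq_xor)

lemma vec_bit_add_cancel_right [simp]: "(y::bit^'n) + x + x = y"
  by (metis add.assoc add_0_right vec_bit_add_self)

lemma vec_bit_add_cancel_left [simp]: "(x::bit^'n) + (x + y) = y"
  by (metis add.assoc add_0 vec_bit_add_self)

lemma vec_bit_diff_eq_add: "(x::bit^'n) - y = x + y"
  by (metis add_eq_0_iff diff_conv_add_uminus vec_bit_add_self)

lemma vec_bit_add_eq_0_iff: "(x::bit^'n) + y = 0 \<longleftrightarrow> x = y"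
  by (metis vec_bit_add_self vec_bit_add_cancel_right)

lemma vec_bit_span_insert:
  "(x::bit^'n::finite) \<in> vec.span (insert a S) \<longleftrightarrow> x \<in> vec.span S \<or> x + a \<in> vec.span S"
proof
  assume "x \<in> vec.span (insert a S)"
  then obtain k :: bit where "x - k *s a \<in> vec.span S"
    by (auto simp: vec.span_breakdown_eq)
  then show "x \<in> vec.span S \<or> x + a \<in> vec.span S"
    using bit_cases[of k] by (auto simp: vec_bit_diff_eq_add)
next
  have "x - 0 *s a = x" "x - 1 *s a = x + a"
    by (simp_all add: vec_bit_diff_eq_add)
  then show "x \<in> vec.span (insert a S)" if "x \<in> vec.span S \<or> x + a \<in> vec.span S"
    using that unfolding vec.span_breakdown_eq by metis
qed

lemma vec_bit_span_pair: "vec.span {X, Y::bit^'n::finite} = {0, X, Y, X + Y}"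
proof -
  have "x \<in> vec.span {X, Y} \<longleftrightarrow> x \<in> {0, X, Y, X + Y}" for x
    unfolding vec_bit_span_insert[of x X "{Y}"] vec_bit_span_insert[of _ Y "{}"] vec.span_empty
    by (simp only: add.assoc vec_bit_add_eq_0_iff insert_iff empty_iff) blast
  then show ?thesis by blast
qed

lemma qf_zero [simp]: "qf A 0 = 0"
  by (simp add: qf_def)

lemma qf_add: "qf A (x + y) = qf A x + qf A y + polar A x y"
  by (simp add: polar_def del: add_bit_eq_xor)

lemma polar_eq_sum: "polar A x y = (\<Sum>i\<in>UNIV. \<Sum>j\<in>UNIV. A i j * (x$i * y$j + y$i * x$j))"
proof -
  have "qf A (x + y) = qf A x + qf A y + (\<Sum>i\<in>UNIV. \<Sum>j\<in>UNIV. A i j * (x$i * y$j + y$i * x$j))"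
    unfolding qf_def
    by (simp add: sum.distrib[symmetric] algebra_simps del: add_bit_eq_xor mult_bit_eq_and)
  then show ?thesis
    by (simp add: polar_def del: add_bit_eq_xor mult_bit_eq_and)
qed

lemma polar_add_left: "polar A (x + y) z = polar A x z + polar A y z"
  unfolding polar_eq_sum
  by (simp add: sum.distrib[symmetric] algebra_simps del: add_bit_eq_xor mult_bit_eq_and)

lemma adjG_iff_qf_add:
  assumes "R \<in> quadric A" "P \<in> quadric A" "R \<noteq> P"
  shows "adjG A R P \<longleftrightarrow> qf A (R + P) = 0"
proof -
  have "R + P \<noteq> 0"
    using assms(3) vec_bit_add_eq_0_iff by blast
  moreover from this have "proj_span {R, P} = {R, P, R + P}"
    using assms unfolding proj_span_def vec_bit_span_pair quadric_def by auto
  ultimately show ?thesis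
    using assms unfolding adjG_def quadric_def by auto
qed

lemma two_card_eq_card_if_involution:
  assumes "finite S" "\<And>x. x \<in> S \<Longrightarrow> f x \<in> S" "\<And>x. x \<in> S \<Longrightarrow> f (f x) = x"
    and "\<And>x. x \<in> S \<Longrightarrow> P (f x) \<longleftrightarrow> \<not> P x"
  shows "2 * card {x \<in> S. P x} = card S"
proof -
  have "bij_betw f {x \<in> S. \<not> P x} {x \<in> S. P x}"
    by (rule bij_betw_byWitness[where f' = f]) (use assms(2-4) in auto)
  then have swap: "card {x \<in> S. \<not> P x} = card {x \<in> S. P x}"
    by (rule bij_betw_same_card)
  have "card S = card ({x \<in> S. P x} \<union> {x \<in> S. \<not> P x})"
    by (rule arg_cong[where f = card]) blast
  also have "\<dots> = card {x \<in> S. P x} + card {x \<in> S. \<not> P x}"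
    using assms(1) by (simp add: card_Un_disjoint disjoint_iff)
  finally show ?thesis
    using swap by simp
qed

locale quadric_subspace =
  fixes A :: "'n::finite \<Rightarrow> 'n \<Rightarrow> bit" and W U :: "(bit ^ 'n) set"
  assumes subspace: "vec.subspace U" and W_eq: "W = U - {0}" and W_quadric: "W \<subseteq> quadric A"
begin

lemma span_W: "vec.span W = U"
  using subspace W_eq by (simp add: vec.span_eq_iff)

lemma qf_on_U: "u \<in> U \<Longrightarrow> qf A u = 0"
  using W_quadric W_eq unfolding quadric_def by (cases "u = 0") auto

lemma span_insert_W_iff: "x \<in> vec.span (insert P W) \<longleftrightarrow> x \<in> U \<or> x + P \<in> U"
  using vec_bit_span_insert[of x P W] span_W by simp

lemma type_i_adjG_type_ii:
  assumes "type_i A W R" "type_ii A W P"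
  shows "adjG A R P"
proof -
  have "vec.span {R, P} \<subseteq> vec.span (insert P W)"
    using assms unfolding type_i_def by (intro vec.span_mono) auto
  then show ?thesis
    using assms unfolding adjG_def type_i_def type_ii_def proj_span_def by auto
qed

lemma type_i_adjG_type_i:
  assumes "type_i A W X" "type_i A W Y" "X \<noteq> Y"
  shows "adjG A X Y"
proof -
  have "vec.span {X, Y} \<subseteq> U"
    using assms span_W vec.span_mono[of "{X, Y}" W] unfolding type_i_def by auto
  then have "proj_span {X, Y} \<subseteq> quadric A"
    using W_quadric W_eq unfolding proj_span_def by auto
  then show ?thesis
    using assms unfolding adjG_def type_i_def by auto
qed

lemma type_iii_obtains_polar_one:
  assumes "type_iii A W R"
  obtains u where "u \<in> U" "polar A R u = 1"
proof -
  from assms obtain x where x: "x \<in> vec.span (insert R W)" "x \<noteq> 0" "x \<notin> quadric A"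
    unfolding type_iii_def proj_span_def by auto
  then have "x \<notin> U"
    using W_eq W_quadric by auto
  then have u: "x + R \<in> U"
    using x(1) span_insert_W_iff by auto
  have "qf A (R + (x + R)) = 1"
    using x(2,3) by (simp add: add.commute quadric_def)
  then have "polar A R (x + R) = 1"
    using qf_add[of A R "x + R"] qf_on_U[OF u] assms
    by (simp add: type_iii_def quadric_def del: add_bit_eq_xor)
  with u that show ?thesis by blast
qed

lemma type_ii_translate:
  assumes P: "type_ii A W P" and u: "u \<in> U"
  shows "type_ii A W (P + u)" "polar A P u = 0"
proof -
  have P_U: "P \<notin> U"
    using P W_eq unfolding type_ii_def quadric_def by auto
  have span: "P + u \<in> vec.span (insert P W)"
    using u span_insert_W_iff by (metis add.commute vec_bit_add_cancel_left)
  have "P + u \<noteq> 0"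
    using P_U u by (auto simp: vec_bit_add_eq_0_iff)
  with P span have q: "P + u \<in> quadric A"
    unfolding type_ii_def proj_span_def by auto
  have "P + u \<notin> U"
  proof
    assume "P + u \<in> U"
    then have "P + u + u \<in> U"
      using u subspace vec.subspace_add by blast
    with P_U show False by simp
  qed
  then have "P + u \<notin> W"
    using W_eq by auto
  moreover have "vec.span (insert (P + u) W) \<subseteq> vec.span (insert P W)"
    using span by (intro vec.span_minimal) (auto intro: vec.span_base simp: vec.subspace_span)
  then have "proj_span (insert (P + u) W) \<subseteq> quadric A"
    using P unfolding type_ii_def proj_span_def by blast
  ultimately show "type_ii A W (P + u)"
    using q unfolding type_ii_def by blast
  have "qf A P = 0" "qf A (P + u) = 0"
    using P q unfolding type_ii_def quadric_def by auto
  then show "polar A P u = 0"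
    using qf_add[of A P u] qf_on_U[OF u] by (simp del: add_bit_eq_xor)
qed

lemma type_iii_half_adjacent:
  assumes R: "type_iii A W R"
  shows "2 * card {P \<in> Xset A W. adjG A R P} = card (Xset A W)"
proof -
  obtain u where u: "u \<in> U" "polar A R u = 1"
    using type_iii_obtains_polar_one[OF R] .
  show ?thesis
  proof (rule two_card_eq_card_if_involution[where f = "\<lambda>P. P + u"])
    fix P assume "P \<in> Xset A W"
    then have P: "type_ii A W P"
      by (simp add: Xset_def)
    note P' = type_ii_translate[OF P u(1)]
    show "P + u \<in> Xset A W"
      using P' by (simp add: Xset_def)
    have "qf A (R + (P + u)) = qf A (R + P) + 1"
      using qf_add[of A "R + P" u] polar_add_left[of A R P u] u P' qf_on_U[OF u(1)]
      by (simp add: add.assoc del: add_bit_eq_xor)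
    then have "qf A (R + (P + u)) = 0 \<longleftrightarrow> qf A (R + P) \<noteq> 0"
      using bit_cases[of "qf A (R + P)"] by auto
    moreover have "R \<in> quadric A" "P \<in> quadric A" "P + u \<in> quadric A" "R \<noteq> P" "R \<noteq> P + u"
      using R P P' unfolding type_ii_def type_iii_def by auto
    ultimately show "adjG A R (P + u) \<longleftrightarrow> \<not> adjG A R P"
      by (simp add: adjG_iff_qf_add)
  qed simp_all
qed

lemma type_iii_switched: "type_iii A W R \<Longrightarrow> switched A W R"
  using type_iii_half_adjacent unfolding switched_def Yset_def by auto

lemma type_i_not_switched:
  assumes "type_i A W R" "Xset A W \<noteq> {}"
  shows "\<not> switched A W R"
proof -
  have "{P \<in> Xset A W. adjG A R P} = Xset A W"
    using type_i_adjG_type_ii[OF assms(1)] unfolding Xset_def by auto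
  moreover have "card (Xset A W) \<noteq> 0"
    using assms(2) by simp
  ultimately show ?thesis
    unfolding switched_def by auto
qed

lemma adjGs_iff:
  assumes "X \<in> quadric A" "Y \<in> quadric A" "X \<noteq> Y"
  shows "adjGs A W X Y \<longleftrightarrow>
    (if (type_ii A W X \<and> type_iii A W Y) \<or> (type_iii A W X \<and> type_ii A W Y)
     then \<not> adjG A X Y else adjG A X Y)"
proof -
  have switched_iff: "switched A W Z \<longleftrightarrow> type_iii A W Z" if "Z' \<in> Xset A W" for Z Z'
  proof
    assume switched: "switched A W Z"
    then have "type_i A W Z \<or> type_iii A W Z"
      by (simp add: switched_def Yset_def)
    with switched that show "type_iii A W Z"
      using type_i_not_switched by blast
  qed (rule type_iii_switched)
  have "(X \<in> Xset A W \<and> switched A W Y) \<or> (Y \<in> Xset A W \<and> switched A W X) \<longleftrightarrow>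
      (type_ii A W X \<and> type_iii A W Y) \<or> (type_iii A W X \<and> type_ii A W Y)"
    using switched_iff[of X Y] switched_iff[of Y X] by (auto simp: Xset_def)
  then show ?thesis
    using assms unfolding adjGs_def by simp
qed

end

theorem corollary4p5:
  fixes A :: "'n::finite \<Rightarrow> 'n \<Rightarrow> bit"
    and W :: "(bit ^ 'n) set"
    and X Y :: "bit ^ 'n"
    and g s :: nat
  assumes "nonsingular A"
    and "proj_index A = g" and "1 \<le> g" and "s < g"
    and "proj_subspace W s" and "W \<subseteq> quadric A"
    and "X \<in> quadric A" and "Y \<in> quadric A" and "X \<noteq> Y"
  shows "((type_ii A W X \<and> type_iii A W Y) \<or> (type_iii A W X \<and> type_ii A W Y)
            \<longrightarrow> (adjGs A W X Y \<longleftrightarrow> \<not> proj_span {X, Y} \<subseteq> quadric A))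
       \<and> (\<not> ((type_ii A W X \<and> type_iii A W Y) \<or> (type_iii A W X \<and> type_ii A W Y))
            \<longrightarrow> (adjGs A W X Y \<longleftrightarrow> proj_span {X, Y} \<subseteq> quadric A))
       \<and> (type_i A W X \<and> type_i A W Y \<longrightarrow> adjGs A W X Y)
       \<and> (type_i A W X \<and> type_ii A W Y \<longrightarrow> adjGs A W X Y)"
proof -
  obtain U where "vec.subspace U" "W = U - {0}"
    using assms(5) unfolding proj_subspace_def by blast
  then interpret quadric_subspace A W U
    using assms(6) by unfold_locales
  have adjG_iff_line: "adjG A X Y \<longleftrightarrow> proj_span {X, Y} \<subseteq> quadric A"
    using assms(7-9) unfolding adjG_def by auto
  have "type_i A W X \<Longrightarrow> type_i A W Y \<Longrightarrow> adjG A X Y"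
    using type_i_adjG_type_i assms(9) by blast
  moreover have "type_i A W X \<Longrightarrow> type_ii A W Y \<Longrightarrow> adjG A X Y"
    by (rule type_i_adjG_type_ii)
  moreover have "\<not> (type_i A W Z \<and> type_iii A W Z) \<and> \<not> (type_i A W Z \<and> type_ii A W Z)" for Z
    unfolding type_i_def type_ii_def type_iii_def by auto
  ultimately show ?thesis
    using adjGs_iff[OF assms(7-9)] adjG_iff_line by auto
qed

end
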